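(* Let $f:\mathbb{R}^d\to\mathbb{R}$ be convex and $L$-smooth with a minimizer $x^\star$, and let $x_0\in\mathbb{R}^d$ satisfy $f(x_0)-f(x^\star)\le\Delta_0$. Fix an integer $N\ge1$, let $\theta_N=1$ and, for $k=N-1,\dots,0$, let $\theta_k>0$ satisfy $\theta_k^2-\theta_k=\theta_{k+1}^2$. Let $v_0=\mathbf{0}$ and for $k=0,\dots,N-1$, $$v_{k+1}=v_k+\frac{1}{L\theta_k\theta_{k+1}^2}\nabla f(x_k),\qquad x_{k+1}=x_k-\frac{1}{L}\nabla f(x_k)-(2\theta_{k+1}^3-\theta_{k+1}^2)v_{k+1}.$$ Then the output satisfies $\|\nabla f(x_N)\|^2\le\dfrac{8L\Delta_0}{(N+2)^2}$.
   Context: $L$-smooth means $\|\nabla f(x)-\nabla f(y)\|\le L\|x-y\|$ for all $x,y$; $\|\cdot\|$ is the Euclidean norm. *)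

theory Defs
  imports "HOL-Analysis.Analysis"
begin

definition L_smooth :: "real \<Rightarrow> ('a::euclidean_space \<Rightarrow> 'a) \<Rightarrow> bool" where
  "L_smooth L g \<longleftrightarrow> (\<forall>x y. norm (g x - g y) \<le> L * norm (x - y))"

end

theory Submission
  imports Defs
begin

text \<open>Dividing \<open>f\<close> by \<open>L\<close> reduces to \<open>L = 1\<close>. For a convex \<open>1\<close>-smooth function any two
  iterates satisfy the interpolation inequality
  \<open>f\<^sub>j + g\<^sub>j \<bullet> (x\<^sub>i - x\<^sub>j) + \<parallel>g\<^sub>i - g\<^sub>j\<parallel>\<^sup>2 / 2 \<le> f\<^sub>i\<close>.
  A potential \<open>P\<^sub>m\<close> changes from \<open>m\<close> to \<open>m + 1\<close> by exactly a nonnegative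
  combination of two such inequalities, with weights \<open>1 / \<theta>\<^sub>m\<^sub>+\<^sub>1\<^sup>2\<close> and
  \<open>1 / (\<theta>\<^sub>m \<theta>\<^sub>m\<^sub>+\<^sub>1\<^sup>2)\<close>, so \<open>P\<^sub>0 \<le> P\<^sub>N\<close>. Here \<open>P\<^sub>N = - \<parallel>g\<^sub>N\<parallel>\<^sup>2\<close>, while
  \<open>P\<^sub>0 \<ge> -2 (f(x\<^sub>0) - f\<^sup>\<star>) / \<theta>\<^sub>0\<^sup>2\<close>, and the recursion for \<open>\<theta>\<close> forces
  \<open>\<theta>\<^sub>k \<ge> \<theta>\<^sub>k\<^sub>+\<^sub>1 + 1/2\<close>, hence \<open>\<theta>\<^sub>0 \<ge> (N + 2) / 2\<close>.\<close>

lemma has_real_derivative_along_line: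
  fixes f :: "'a::real_inner \<Rightarrow> real"
  assumes grad: "\<And>y. (f has_derivative (\<lambda>h. g y \<bullet> h)) (at y)"
  shows "((\<lambda>t. f (x + t *\<^sub>R d)) has_real_derivative g (x + t *\<^sub>R d) \<bullet> d) (at t)"
proof -
  have "((\<lambda>t. x + t *\<^sub>R d) has_derivative (\<lambda>s. s *\<^sub>R d)) (at t)"
    by (auto intro!: derivative_eq_intros)
  from has_derivative_compose[OF this grad]
  have "((\<lambda>t. f (x + t *\<^sub>R d)) has_derivative (\<lambda>s. g (x + t *\<^sub>R d) \<bullet> d * s)) (at t)"
    by (simp add: o_def mult.commute)
  then show ?thesis
    by (simp add: has_field_derivative_def)
qed

lemma convex_on_gradient_inequality:
  fixes f :: "'a::real_inner \<Rightarrow> real"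
  assumes grad: "\<And>y. (f has_derivative (\<lambda>h. g y \<bullet> h)) (at y)"
    and convex: "convex_on UNIV f"
  shows "f x + g x \<bullet> (y - x) \<le> f y"
proof -
  define \<psi> where "\<psi> = (\<lambda>t. f (x + t *\<^sub>R (y - x)))"
  have "convex_on UNIV \<psi>"
  proof (rule convex_onI)
    fix t a b :: real
    assume "0 < t" "t < 1"
    moreover have "x + ((1 - t) * a + t * b) *\<^sub>R (y - x)
        = (1 - t) *\<^sub>R (x + a *\<^sub>R (y - x)) + t *\<^sub>R (x + b *\<^sub>R (y - x))"
      by (simp add: algebra_simps)
    ultimately show "\<psi> ((1 - t) *\<^sub>R a + t *\<^sub>R b) \<le> (1 - t) * \<psi> a + t * \<psi> b"
      using convex_onD[OF convex, of t "x + a *\<^sub>R (y - x)" "x + b *\<^sub>R (y - x)"]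
      by (simp add: \<psi>_def)
  qed simp
  moreover have "(\<psi> has_real_derivative g x \<bullet> (y - x)) (at 0)"
    using has_real_derivative_along_line[OF grad, of x "y - x" 0] by (simp add: \<psi>_def)
  ultimately have "g x \<bullet> (y - x) * (1 - 0) \<le> \<psi> 1 - \<psi> 0"
    by (intro convex_on_imp_above_tangent) auto
  then show ?thesis
    by (simp add: \<psi>_def)
qed

lemma L_smooth_descent:
  fixes f :: "'a::euclidean_space \<Rightarrow> real"
  assumes grad: "\<And>y. (f has_derivative (\<lambda>h. g y \<bullet> h)) (at y)"
    and smooth: "L_smooth L g"
  shows "f y \<le> f x + g x \<bullet> (y - x) + L / 2 * (norm (y - x))\<^sup>2"
proof -
  define d where "d = y - x"
  define \<phi> where "\<phi> t = f (x + t *\<^sub>R d) - t * (g x \<bullet> d) - L / 2 * t\<^sup>2 * (norm d)\<^sup>2" for t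
  have "\<phi> 1 \<le> \<phi> 0"
  proof (rule DERIV_nonpos_imp_nonincreasing[of 0 1 \<phi>])
    fix t :: real
    assume t: "0 \<le> t" "t \<le> 1"
    have "(\<phi> has_real_derivative (g (x + t *\<^sub>R d) - g x) \<bullet> d - L * t * (norm d)\<^sup>2) (at t)"
      unfolding \<phi>_def
      by (auto intro!: derivative_eq_intros has_real_derivative_along_line[OF grad]
          simp: inner_diff_left)
    moreover have "(g (x + t *\<^sub>R d) - g x) \<bullet> d \<le> L * t * (norm d)\<^sup>2"
    proof -
      have "(g (x + t *\<^sub>R d) - g x) \<bullet> d \<le> norm (g (x + t *\<^sub>R d) - g x) * norm d"
        by (rule norm_cauchy_schwarz)
      also have "\<dots> \<le> L * norm (t *\<^sub>R d) * norm d"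
        using smooth[unfolded L_smooth_def, rule_format, of "x + t *\<^sub>R d" x]
        by (intro mult_right_mono) simp_all
      finally show ?thesis
        using t by (simp add: power2_eq_square mult.assoc)
    qed
    ultimately show "\<exists>y. (\<phi> has_real_derivative y) (at t) \<and> y \<le> 0"
      by force
  qed simp
  then show ?thesis
    by (simp add: \<phi>_def d_def)
qed

lemma L_smooth_convex_interpolation:
  fixes f :: "'a::euclidean_space \<Rightarrow> real"
  assumes grad: "\<And>y. (f has_derivative (\<lambda>h. g y \<bullet> h)) (at y)"
    and convex: "convex_on UNIV f" and smooth: "L_smooth L g" and "0 < L"
  shows "f x + g x \<bullet> (y - x) + (norm (g y - g x))\<^sup>2 / (2 * L) \<le> f y"
proof -
  define r where "r = g y - g x"
  define z where "z = y - (1 / L) *\<^sub>R r"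
  have "f x + g x \<bullet> (z - x) \<le> f z"
    by (rule convex_on_gradient_inequality[OF grad convex])
  also have "f z \<le> f y + g y \<bullet> (z - y) + L / 2 * (norm (z - y))\<^sup>2"
    by (rule L_smooth_descent[OF grad smooth])
  also have "g y \<bullet> (z - y) = g x \<bullet> (z - y) - (norm r)\<^sup>2 / L"
    by (simp add: z_def r_def inner_diff_left power2_norm_eq_inner diff_divide_distrib)
  also have "L / 2 * (norm (z - y))\<^sup>2 = (norm r)\<^sup>2 / (2 * L)"
    using \<open>0 < L\<close> by (simp add: z_def field_simps power2_eq_square)
  finally show ?thesis
    by (simp add: r_def z_def inner_diff_right)
qed

lemma L_smooth_grad_norm_le_gap:
  fixes f :: "'a::euclidean_space \<Rightarrow> real"
  assumes grad: "\<And>y. (f has_derivative (\<lambda>h. g y \<bullet> h)) (at y)"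
    and smooth: "L_smooth L g" and "0 < L" and min: "\<And>y. f x_min \<le> f y"
  shows "(norm (g x))\<^sup>2 \<le> 2 * L * (f x - f x_min)"
proof -
  have "f x_min \<le> f (x - (1 / L) *\<^sub>R g x)"
    by (rule min)
  also have "\<dots> \<le> f x + g x \<bullet> (- (1 / L) *\<^sub>R g x) + L / 2 * (norm (- (1 / L) *\<^sub>R g x))\<^sup>2"
    using L_smooth_descent[OF grad smooth, of "x - (1 / L) *\<^sub>R g x" x] by simp
  also have "\<dots> = f x - (norm (g x))\<^sup>2 / (2 * L)"
    using \<open>0 < L\<close> by (simp add: power2_norm_eq_inner[symmetric] field_simps power2_eq_square)
  finally show ?thesis
    using \<open>0 < L\<close> by (simp add: field_simps)
qed

lemma convex_L_smooth_rescale: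
  fixes f :: "'a::euclidean_space \<Rightarrow> real"
  assumes grad: "\<And>y. (f has_derivative (\<lambda>h. g y \<bullet> h)) (at y)"
    and convex: "convex_on UNIV f" and smooth: "L_smooth L g" and "0 < L"
  shows "((\<lambda>x. f x / L) has_derivative (\<lambda>h. ((1 / L) *\<^sub>R g y) \<bullet> h)) (at y)"
    and "convex_on UNIV (\<lambda>x. f x / L)"
    and "L_smooth 1 (\<lambda>x. (1 / L) *\<^sub>R g x)"
proof -
  show "((\<lambda>x. f x / L) has_derivative (\<lambda>h. ((1 / L) *\<^sub>R g y) \<bullet> h)) (at y)"
    using has_derivative_mult_left[where y = "1 / L", OF grad] by simp
  show "convex_on UNIV (\<lambda>x. f x / L)"
    using convex \<open>0 < L\<close> by (intro convex_on_cdiv) simp_all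
  show "L_smooth 1 (\<lambda>x. (1 / L) *\<^sub>R g x)"
    using smooth \<open>0 < L\<close>
    by (simp add: L_smooth_def flip: scaleR_diff_right) (simp add: field_simps)
qed

lemma theta_step_ge:
  fixes a b :: real
  assumes "0 < a" and "a\<^sup>2 - a = b\<^sup>2"
  shows "b + 1 / 2 \<le> a"
proof -
  have "0 \<le> a * (a - 1)"
    using assms(2) by (simp add: power2_eq_square algebra_simps)
  then have "1 \<le> a"
    using \<open>0 < a\<close> by (simp add: zero_le_mult_iff)
  have "b\<^sup>2 \<le> (a - 1 / 2)\<^sup>2"
    using assms(2) by (simp add: power2_eq_square algebra_simps)
  from power2_le_imp_le[OF this] \<open>1 \<le> a\<close> show ?thesis
    by simp
qed

lemma theta_step_coefficients:
  fixes a b :: real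
  assumes "0 < a" "0 < b" and rec: "a\<^sup>2 - a = b\<^sup>2"
    and \<mu>: "\<mu> = 1 / (a * b\<^sup>2)" and c: "c = 2 * b ^ 3 - b\<^sup>2" and h: "h = (b\<^sup>2 - b)\<^sup>2"
  shows "(a\<^sup>2 - a)\<^sup>2 = c + h"
    and "1 / a\<^sup>2 = \<mu>\<^sup>2 * (c + h)"
    and "1 / b\<^sup>2 = \<mu>\<^sup>2 * (c + h) + \<mu>"
    and "2 * a - 1 = 1 + 2 * \<mu> * (c + h)"
    and "2 * b - 1 = (\<mu>\<^sup>2 * (c + h) + \<mu>) * c"
proof -
  have ch: "c + h = b ^ 4"
    unfolding c h by (simp add: power2_eq_square power3_eq_cube power4_eq_xxxx algebra_simps)
  show "(a\<^sup>2 - a)\<^sup>2 = c + h"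
    unfolding ch rec by (simp flip: power_mult)
  show a2: "1 / a\<^sup>2 = \<mu>\<^sup>2 * (c + h)"
    using \<open>0 < b\<close> unfolding ch \<mu> by (simp add: field_simps power2_eq_square power4_eq_xxxx)
  have "1 / a\<^sup>2 + \<mu> = (b\<^sup>2 + a) / (a\<^sup>2 * b\<^sup>2)"
    using assms(1,2) unfolding \<mu> by (simp add: field_simps power2_eq_square)
  also have "b\<^sup>2 + a = a\<^sup>2"
    using rec by simp
  also have "a\<^sup>2 / (a\<^sup>2 * b\<^sup>2) = 1 / b\<^sup>2"
    using \<open>0 < a\<close> by simp
  finally show b2: "1 / b\<^sup>2 = \<mu>\<^sup>2 * (c + h) + \<mu>"
    unfolding a2 by simp
  show "2 * a - 1 = 1 + 2 * \<mu> * (c + h)"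
    using assms(1,2) rec unfolding ch \<mu> by (simp add: field_simps power2_eq_square power4_eq_xxxx)
  show "2 * b - 1 = (\<mu>\<^sup>2 * (c + h) + \<mu>) * c"
    using \<open>0 < b\<close> unfolding b2[symmetric] by (simp add: c field_simps power2_eq_square power3_eq_cube)
qed

text \<open>In terms of \<open>\<mu> = 1 / (\<theta>\<^sub>k \<theta>\<^sub>k\<^sub>+\<^sub>1\<^sup>2)\<close>, the momentum coefficient
  \<open>c = 2 \<theta>\<^sub>k\<^sub>+\<^sub>1\<^sup>3 - \<theta>\<^sub>k\<^sub>+\<^sub>1\<^sup>2\<close> and \<open>h = (\<theta>\<^sub>k\<^sub>+\<^sub>1\<^sup>2 - \<theta>\<^sub>k\<^sub>+\<^sub>1)\<^sup>2\<close>, all coefficients of the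
  potential at \<open>k\<close> and \<open>k + 1\<close> become polynomials (by theta_step_coefficients), and the
  one-step change of the potential is a polynomial identity in inner products.\<close>
lemma potential_step_identity:
  fixes g g' gN w w' xN x x' :: "'a::real_inner"
  assumes w': "w' = w + \<mu> *\<^sub>R g" and x': "x' = x - g - c *\<^sub>R w'"
  shows "(\<mu>\<^sup>2 * (c + h) + \<mu>) * (FN - F' - (norm g')\<^sup>2 / 2 - (norm gN)\<^sup>2 / 2)
      - (\<mu>\<^sup>2 * (c + h) + \<mu>) * c * (g' \<bullet> w') - h * (norm w')\<^sup>2 - w' \<bullet> (xN - x' - gN)
    = \<mu>\<^sup>2 * (c + h) * (FN - F - (norm g)\<^sup>2 / 2 - (norm gN)\<^sup>2 / 2)
      - (1 + 2 * \<mu> * (c + h)) * (g \<bullet> w) - (c + h) * (norm w)\<^sup>2 - w \<bullet> (xN - x - gN)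
      + (\<mu>\<^sup>2 * (c + h) + \<mu>) * (F - F' - g' \<bullet> (x - x') - (norm (g - g'))\<^sup>2 / 2)
      + \<mu> * (FN - F - g \<bullet> (xN - x) - (norm (gN - g))\<^sup>2 / 2)"
  unfolding x' w' power2_norm_eq_inner
  by (simp add: inner_simps inner_commute algebra_simps power2_eq_square
      add_divide_distrib diff_divide_distrib)

text \<open>The method applied to a function normalised to \<open>L = 1\<close>: \<open>F k\<close> and \<open>G k\<close> are the value and
  gradient at \<open>x k\<close>, and \<open>F_min\<close> is the optimal value. Only the interpolation inequalities
  between iterates and the optimality gap bound enter the argument.\<close>
locale momentum_iteration =
  fixes N :: nat and \<theta> F :: "nat \<Rightarrow> real" and F_min :: real and G x v :: "nat \<Rightarrow> 'a::real_inner"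
  assumes theta_last: "\<theta> N = 1"
    and theta_pos: "\<And>k. k < N \<Longrightarrow> 0 < \<theta> k"
    and theta_Suc: "\<And>k. k < N \<Longrightarrow> (\<theta> k)\<^sup>2 - \<theta> k = (\<theta> (Suc k))\<^sup>2"
    and v_0: "v 0 = 0"
    and v_Suc: "\<And>k. k < N \<Longrightarrow> v (Suc k) = v k + (1 / (\<theta> k * (\<theta> (Suc k))\<^sup>2)) *\<^sub>R G k"
    and x_Suc: "\<And>k. k < N \<Longrightarrow>
      x (Suc k) = x k - G k - (2 * \<theta> (Suc k) ^ 3 - (\<theta> (Suc k))\<^sup>2) *\<^sub>R v (Suc k)"
    and interpolation: "\<And>i j. F j + G j \<bullet> (x i - x j) + (norm (G i - G j))\<^sup>2 / 2 \<le> F i"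
    and optimality_gap: "\<And>i. (norm (G i))\<^sup>2 / 2 \<le> F i - F_min"
begin

definition interpolation_slack :: "nat \<Rightarrow> nat \<Rightarrow> real" where
  "interpolation_slack i j = F i - F j - G j \<bullet> (x i - x j) - (norm (G i - G j))\<^sup>2 / 2"

definition potential :: "nat \<Rightarrow> real" where
  "potential m = (F N - F m - (norm (G m))\<^sup>2 / 2 - (norm (G N))\<^sup>2 / 2) / (\<theta> m)\<^sup>2
     - (2 * \<theta> m - 1) * (G m \<bullet> v m) - ((\<theta> m)\<^sup>2 - \<theta> m)\<^sup>2 * (norm (v m))\<^sup>2
     - v m \<bullet> (x N - x m - G N)"

lemma theta_pos_atMost: "k \<le> N \<Longrightarrow> 0 < \<theta> k"
  using theta_pos theta_last by (cases "k = N") auto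

lemma potential_Suc:
  assumes "m < N"
  shows "potential (Suc m) = potential m + interpolation_slack m (Suc m) / (\<theta> (Suc m))\<^sup>2
    + interpolation_slack N m / (\<theta> m * (\<theta> (Suc m))\<^sup>2)"
proof -
  define \<mu> c h where "\<mu> = 1 / (\<theta> m * (\<theta> (Suc m))\<^sup>2)"
    and "c = 2 * \<theta> (Suc m) ^ 3 - (\<theta> (Suc m))\<^sup>2" and "h = ((\<theta> (Suc m))\<^sup>2 - \<theta> (Suc m))\<^sup>2"
  have "0 < \<theta> m" "0 < \<theta> (Suc m)"
    using assms theta_pos_atMost by auto
  note coeff = theta_step_coefficients[OF this theta_Suc[OF assms] \<mu>_def c_def h_def]
  have weight: "X / (\<theta> m)\<^sup>2 = \<mu>\<^sup>2 * (c + h) * X" for X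
    unfolding coeff(2)[symmetric] by simp
  have weight_Suc: "X / (\<theta> (Suc m))\<^sup>2 = (\<mu>\<^sup>2 * (c + h) + \<mu>) * X" for X
    unfolding coeff(3)[symmetric] by simp
  have step: "X / (\<theta> m * (\<theta> (Suc m))\<^sup>2) = \<mu> * X" for X
    by (simp add: \<mu>_def)
  have v: "v (Suc m) = v m + \<mu> *\<^sub>R G m"
    using v_Suc[OF assms] by (simp add: \<mu>_def)
  have x: "x (Suc m) = x m - G m - c *\<^sub>R v (Suc m)"
    using x_Suc[OF assms] by (simp add: c_def)
  show ?thesis
    unfolding potential_def interpolation_slack_def weight weight_Suc step coeff(1,4,5) h_def[symmetric]
    by (rule potential_step_identity[OF v x])
qed

lemma interpolation_slack_nonneg: "0 \<le> interpolation_slack i j"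
  using interpolation[of j i] by (simp add: interpolation_slack_def)

lemma potential_mono_Suc:
  assumes "m < N"
  shows "potential m \<le> potential (Suc m)"
  using potential_Suc[OF assms] interpolation_slack_nonneg[of m "Suc m"]
    interpolation_slack_nonneg[of N m] theta_pos_atMost[of m] theta_pos_atMost[of "Suc m"] assms
  by (simp add: add_increasing2)

lemma potential_0: "potential 0 = (F N - F 0 - (norm (G 0))\<^sup>2 / 2 - (norm (G N))\<^sup>2 / 2) / (\<theta> 0)\<^sup>2"
  by (simp add: potential_def v_0)

lemma potential_last: "potential N = - (norm (G N))\<^sup>2"
  by (simp add: potential_def theta_last inner_commute)

lemma theta_lower_bound:
  assumes "k \<le> N"
  shows "(real (N - k) + 2) / 2 \<le> \<theta> k"
  using assms
proof (induction k rule: inc_induct)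
  case base
  then show ?case
    by (simp add: theta_last)
next
  case (step k)
  have "(real (N - k) + 2) / 2 = (real (N - Suc k) + 2) / 2 + 1 / 2"
    using step.hyps by (simp add: Suc_diff_Suc of_nat_diff)
  also have "\<dots> \<le> \<theta> (Suc k) + 1 / 2"
    using step.IH by simp
  also have "\<dots> \<le> \<theta> k"
    using theta_step_ge[OF theta_pos theta_Suc] step.hyps by simp
  finally show ?case .
qed

lemma grad_norm_last_bound: "(norm (G N))\<^sup>2 \<le> 8 * (F 0 - F_min) / (real N + 2)\<^sup>2"
proof -
  have gap_0: "0 \<le> F 0 - F_min"
    using optimality_gap[of 0] zero_le_power2[of "norm (G 0)"] by linarith
  have "potential N - potential 0 = (\<Sum>m<N. potential (Suc m) - potential m)"
    by (rule sum_lessThan_telescope[symmetric])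
  also have "\<dots> \<ge> 0"
    using potential_mono_Suc by (intro sum_nonneg) simp
  finally have "(norm (G N))\<^sup>2 \<le> (F 0 - F N + (norm (G 0))\<^sup>2 / 2 + (norm (G N))\<^sup>2 / 2) / (\<theta> 0)\<^sup>2"
    by (simp add: potential_0 potential_last diff_divide_distrib add_divide_distrib)
  also have "\<dots> \<le> 2 * (F 0 - F_min) / (\<theta> 0)\<^sup>2"
    using optimality_gap[of 0] optimality_gap[of N] by (intro divide_right_mono) simp_all
  also have "\<dots> \<le> 2 * (F 0 - F_min) / ((real N + 2) / 2)\<^sup>2"
    using gap_0 theta_lower_bound[of 0]
    by (intro divide_left_mono power_mono mult_pos_pos) (simp_all add: add_pos_nonneg)
  also have "\<dots> = 8 * (F 0 - F_min) / (real N + 2)\<^sup>2"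
    by (simp add: power_divide)
  finally show ?thesis .
qed

end

theorem theorem1:
  fixes f :: "'a::euclidean_space \<Rightarrow> real"
    and grad :: "'a \<Rightarrow> 'a"
    and L \<Delta>0 :: real
    and xstar x0 :: 'a
    and N :: nat
    and \<theta> :: "nat \<Rightarrow> real"
    and x v :: "nat \<Rightarrow> 'a"
  assumes L_pos: "L > 0"
    and grad: "\<And>y. (f has_derivative (\<lambda>h. grad y \<bullet> h)) (at y)"
    and cvx: "convex_on UNIV f"
    and smooth: "L_smooth L grad"
    and minimizer: "\<And>y. f xstar \<le> f y"
    and init_gap: "f x0 - f xstar \<le> \<Delta>0"
    and N_ge: "N \<ge> 1"
    and theta_N: "\<theta> N = 1"
    and theta_pos: "\<And>k. k < N \<Longrightarrow> \<theta> k > 0"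
    and theta_rec: "\<And>k. k < N \<Longrightarrow> (\<theta> k)\<^sup>2 - \<theta> k = (\<theta> (Suc k))\<^sup>2"
    and x_0: "x 0 = x0"
    and v_0: "v 0 = 0"
    and v_step: "\<And>k. k < N \<Longrightarrow>
        v (Suc k) = v k + (1 / (L * \<theta> k * (\<theta> (Suc k))\<^sup>2)) *\<^sub>R grad (x k)"
    and x_step: "\<And>k. k < N \<Longrightarrow>
        x (Suc k) = x k - (1 / L) *\<^sub>R grad (x k)
                    - (2 * (\<theta> (Suc k))^3 - (\<theta> (Suc k))\<^sup>2) *\<^sub>R v (Suc k)"
  shows "(norm (grad (x N)))\<^sup>2 \<le> 8 * L * \<Delta>0 / (real N + 2)\<^sup>2"
proof -
  define F G where "F k = f (x k) / L" and "G k = (1 / L) *\<^sub>R grad (x k)" for k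
  note rescaled = convex_L_smooth_rescale[OF grad cvx smooth L_pos]
  interpret momentum_iteration N \<theta> F "f xstar / L" G x v
  proof
    show "v (Suc k) = v k + (1 / (\<theta> k * (\<theta> (Suc k))\<^sup>2)) *\<^sub>R G k" if "k < N" for k
      using v_step[OF that] by (simp add: G_def)
    show "x (Suc k) = x k - G k - (2 * \<theta> (Suc k) ^ 3 - (\<theta> (Suc k))\<^sup>2) *\<^sub>R v (Suc k)"
      if "k < N" for k
      using x_step[OF that] by (simp add: G_def)
    show "F j + G j \<bullet> (x i - x j) + (norm (G i - G j))\<^sup>2 / 2 \<le> F i" for i j
      using L_smooth_convex_interpolation[OF rescaled zero_less_one] by (simp add: F_def G_def)
    have "f xstar / L \<le> f y / L" for y
      using minimizer L_pos by (simp add: divide_right_mono)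
    then show "(norm (G i))\<^sup>2 / 2 \<le> F i - f xstar / L" for i
      using L_smooth_grad_norm_le_gap[OF rescaled(1,3) zero_less_one, of xstar "x i"] L_pos
      by (simp add: F_def G_def mult.commute)
  qed (use theta_N theta_pos theta_rec v_0 in auto)
  have "(norm (grad (x N)))\<^sup>2 = L\<^sup>2 * (norm (G N))\<^sup>2"
    using L_pos by (simp add: G_def power_mult_distrib power_divide)
  also have "\<dots> \<le> L\<^sup>2 * (8 * (F 0 - f xstar / L) / (real N + 2)\<^sup>2)"
    using grad_norm_last_bound by (intro mult_left_mono) simp_all
  also have "\<dots> = 8 * L * (f x0 - f xstar) / (real N + 2)\<^sup>2"
    using L_pos by (simp add: F_def x_0 power2_eq_square diff_divide_distrib[symmetric])
  also have "\<dots> \<le> 8 * L * \<Delta>0 / (real N + 2)\<^sup>2"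
    using init_gap L_pos by (intro divide_right_mono) simp_all
  finally show ?thesis .
qed

end
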